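(* Let $\mu_1\in\mathcal C^1(\mathbb R_+)$ satisfy $\mu_1(0)=0$, $\lim_{s\to\infty}\mu_1(s)=m_1$ and $\mu_1'(s)>0$ for all $s>0$. Let $\alpha\in(0,1)$, $k_1>0$, $D_2>0$, $S_1^{\mathrm{in}}>0$, and let $X_1^{1*}>0$ satisfy $X_1^{1*}<S_1^{\mathrm{in}}/(\alpha k_1)$. Define $f_1(x)=\mu_1(S_1^{\mathrm{in}}-\alpha k_1x)$ for $x\in[0,S_1^{\mathrm{in}}/(\alpha k_1)]$ and $g_1(x)=\alpha D_2\,\frac{x-X_1^{1*}}{x}$ for $x>0$. Then the equation $f_1(x)=g_1(x)$ has a unique solution $X_1^{2*}$ in the interval $(X_1^{1*},S_1^{\mathrm{in}}/(\alpha k_1))$.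
   Context: In the paper, $X_1^{1*}=(S_1^{\mathrm{in}}-\lambda_1^1)/(\alpha k_1)$ is the first-bioreactor biomass component of an equilibrium with $S_1^{\mathrm{in}}>\lambda_1^1$, where $\lambda_1^1$ solves $\mu_1(S)=\alpha D_1$; in particular $X_1^{1*}>0$. *)

theory Defs
  imports "HOL-Analysis.Analysis"
begin

end

theory Submission
  imports Defs
begin

text \<open>The difference h(x) = f1(x) - g1(x) is continuous and strictly decreasing on
  [X11, Sin/(\<alpha> k1)]: f1 decreases because \<mu>1 increases, and g1 = \<alpha> D2 - \<alpha> D2 X11 / x
  increases. Since h(X11) = \<mu>1(Sin - \<alpha> k1 X11) > \<mu>1 0 = 0 and
  h(Sin/(\<alpha> k1)) = -g1(Sin/(\<alpha> k1)) < 0, the intermediate value theorem gives exactly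
  one zero in between.\<close>

lemma strict_mono_on_atLeast_if_pos_deriv:
  fixes f f' :: "real \<Rightarrow> real"
  assumes deriv: "\<And>s. s \<ge> a \<Longrightarrow> (f has_real_derivative f' s) (at s within {a..})"
    and pos: "\<And>s. s > a \<Longrightarrow> f' s > 0"
  shows "strict_mono_on {a..} f"
proof (rule strict_mono_onI)
  fix r s assume r: "r \<in> {a..}" and "s \<in> {a..}" and "r < s"
  have interior_deriv: "(f has_real_derivative f' x) (at x)" if "a < x" for x
  proof -
    have "(f has_real_derivative f' x) (at x within {a<..})"
      by (rule has_field_derivative_subset[OF deriv]) (use that in auto)
    moreover have "at x within {a<..} = at x"
      using that by (intro at_within_open) auto
    ultimately show ?thesis
      by simp
  qed
  have cont: "continuous_on {a..} f"
    using deriv by (intro DERIV_continuous_on) simp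
  show "f r < f s"
  proof (rule DERIV_pos_imp_increasing_open[OF \<open>r < s\<close>])
    fix x assume "r < x"
    with r have "a < x" by simp
    then show "\<exists>y. (f has_real_derivative y) (at x) \<and> 0 < y"
      using interior_deriv pos by blast
  next
    show "continuous_on {r..s} f"
      using cont by (rule continuous_on_subset) (use r in auto)
  qed
qed

lemma strict_mono_on_shifted_ratio:
  fixes c X :: real
  assumes "c > 0" "X > 0"
  shows "strict_mono_on {0<..} (\<lambda>x. c * (x - X) / x)"
proof (rule strict_mono_onI)
  fix x y :: real assume "x \<in> {0<..}" "y \<in> {0<..}" "x < y"
  then have "c * X / y < c * X / x"
    using assms by (intro divide_strict_left_mono) auto
  with \<open>x \<in> {0<..}\<close> \<open>y \<in> {0<..}\<close> show "c * (x - X) / x < c * (y - X) / y"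
    by (simp add: right_diff_distrib diff_divide_distrib)
qed

lemma strict_antimono_on_comp_affine:
  fixes \<mu> :: "real \<Rightarrow> real"
  assumes "strict_mono_on {0..} \<mu>" "c > 0"
  shows "strict_antimono_on {..S / c} (\<lambda>x. \<mu> (S - c * x))"
proof (rule monotone_onI)
  fix x y assume "x \<in> {..S / c}" "y \<in> {..S / c}" "x < y"
  with \<open>c > 0\<close> have "0 \<le> S - c * y" "S - c * y < S - c * x"
    by (simp_all add: field_simps)
  then show "\<mu> (S - c * y) < \<mu> (S - c * x)"
    by (intro strict_mono_onD[OF assms(1)]) auto
qed

lemma continuous_on_comp_affine:
  fixes \<mu> :: "real \<Rightarrow> real"
  assumes "continuous_on {0..} \<mu>" "c > 0"
  shows "continuous_on {..S / c} (\<lambda>x. \<mu> (S - c * x))"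
proof (rule continuous_on_compose2[OF assms(1)])
  show "continuous_on {..S / c} (\<lambda>x. S - c * x)"
    by (intro continuous_intros)
  show "(\<lambda>x. S - c * x) ` {..S / c} \<subseteq> {0..}"
    using \<open>c > 0\<close> by (auto simp: field_simps)
qed

lemma ex1_zero_if_strict_antimono_on:
  fixes h :: "real \<Rightarrow> real"
  assumes "a \<le> b" and anti: "strict_antimono_on {a..b} h" and cont: "continuous_on {a..b} h"
    and "h a > 0" "h b < 0"
  shows "\<exists>!x. x \<in> {a<..<b} \<and> h x = 0"
proof -
  obtain x where x: "x \<in> {a..b}" "h x = 0"
    using IVT2'[of h b 0 a] \<open>a \<le> b\<close> cont \<open>h a > 0\<close> \<open>h b < 0\<close> by auto
  with \<open>h a > 0\<close> \<open>h b < 0\<close> have x_open: "x \<in> {a<..<b}"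
    by (auto simp: le_less)
  show ?thesis
  proof (rule ex1I[of _ x])
    fix y assume "y \<in> {a<..<b} \<and> h y = 0"
    then show "y = x"
      using x x_open monotone_onD[OF anti, of x y] monotone_onD[OF anti, of y x]
      by (cases x y rule: linorder_cases) auto
  qed (use x x_open in auto)
qed

lemma ex1_crossing_if_strict_antimono_strict_mono:
  fixes f g :: "real \<Rightarrow> real"
  assumes "a \<le> b"
    and "strict_antimono_on {a..b} f" "continuous_on {a..b} f"
    and "strict_mono_on {a..b} g" "continuous_on {a..b} g"
    and "f a > g a" "f b < g b"
  shows "\<exists>!x. x \<in> {a<..<b} \<and> f x = g x"
proof -
  have "strict_antimono_on {a..b} (\<lambda>x. f x - g x)"
  proof (rule monotone_onI)
    fix x y assume "x \<in> {a..b}" "y \<in> {a..b}" "x < y"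
    then have "f y < f x" "g x < g y"
      using monotone_onD[OF assms(2)] monotone_onD[OF assms(4)] by blast+
    then show "f y - g y < f x - g x"
      by simp
  qed
  moreover have "continuous_on {a..b} (\<lambda>x. f x - g x)"
    using assms(3,5) by (intro continuous_intros)
  ultimately have "\<exists>!x. x \<in> {a<..<b} \<and> f x - g x = 0"
    using assms(1,6,7) by (intro ex1_zero_if_strict_antimono_on) auto
  then show ?thesis
    by simp
qed

theorem lemma1:
  fixes \<mu>1 \<mu>1' :: "real \<Rightarrow> real"
    and m1 \<alpha> k1 D2 Sin X11 :: real
  assumes deriv: "\<And>s. s \<ge> 0 \<Longrightarrow> (\<mu>1 has_real_derivative \<mu>1' s) (at s within {0..})"
    and cont_deriv: "continuous_on {0..} \<mu>1'"
    and mu0: "\<mu>1 0 = 0"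
    and lim: "(\<mu>1 \<longlongrightarrow> m1) at_top"
    and pos_deriv: "\<And>s. s > 0 \<Longrightarrow> \<mu>1' s > 0"
    and alpha: "0 < \<alpha>" "\<alpha> < 1"
    and k1: "k1 > 0" and D2: "D2 > 0" and Sin: "Sin > 0"
    and X11: "X11 > 0" "X11 < Sin / (\<alpha> * k1)"
  shows "\<exists>!x. x \<in> {X11 <..< Sin / (\<alpha> * k1)} \<and>
           \<mu>1 (Sin - \<alpha> * k1 * x) = \<alpha> * D2 * (x - X11) / x"
proof -
  define L where "L = Sin / (\<alpha> * k1)"
  have ak: "\<alpha> * k1 > 0"
    using alpha k1 by simp
  have "X11 \<in> {0<..}"
    using X11 by simp
  then have interval: "{X11..L} \<subseteq> {..Sin / (\<alpha> * k1)}" "{X11..L} \<subseteq> {0<..}"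
    by (auto simp: L_def)
  have \<mu>1_mono: "strict_mono_on {0..} \<mu>1"
    using deriv pos_deriv by (rule strict_mono_on_atLeast_if_pos_deriv)
  have \<mu>1_cont: "continuous_on {0..} \<mu>1"
    using deriv by (intro DERIV_continuous_on) simp
  have "\<exists>!x. x \<in> {X11<..<L} \<and> \<mu>1 (Sin - \<alpha> * k1 * x) = \<alpha> * D2 * (x - X11) / x"
  proof (rule ex1_crossing_if_strict_antimono_strict_mono)
    show "X11 \<le> L"
      using X11 by (simp add: L_def)
    show "strict_antimono_on {X11..L} (\<lambda>x. \<mu>1 (Sin - \<alpha> * k1 * x))"
      using strict_antimono_on_comp_affine[OF \<mu>1_mono ak, of Sin] interval(1) by (rule monotone_on_subset)
    show "continuous_on {X11..L} (\<lambda>x. \<mu>1 (Sin - \<alpha> * k1 * x))"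
      using continuous_on_comp_affine[OF \<mu>1_cont ak, of Sin] interval(1) by (rule continuous_on_subset)
    show "strict_mono_on {X11..L} (\<lambda>x. \<alpha> * D2 * (x - X11) / x)"
      using strict_mono_on_shifted_ratio[of "\<alpha> * D2" X11] alpha D2 X11 interval
      by (auto intro: monotone_on_subset)
    show "continuous_on {X11..L} (\<lambda>x. \<alpha> * D2 * (x - X11) / x)"
      using X11 by (auto intro!: continuous_intros)
    have "\<mu>1 0 < \<mu>1 (Sin - \<alpha> * k1 * X11)"
      using X11 ak by (intro strict_mono_onD[OF \<mu>1_mono]) (auto simp: field_simps)
    then show "\<mu>1 (Sin - \<alpha> * k1 * X11) > \<alpha> * D2 * (X11 - X11) / X11"
      using mu0 by simp
    have "\<alpha> * D2 * (L - X11) / L > 0"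
      using alpha D2 X11 by (intro divide_pos_pos mult_pos_pos) (simp_all add: L_def)
    then show "\<mu>1 (Sin - \<alpha> * k1 * L) < \<alpha> * D2 * (L - X11) / L"
      using alpha(1) k1 mu0 by (simp add: L_def)
  qed
  then show ?thesis
    by (simp add: L_def)
qed

end
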